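(* Let $Y=\left(\sum_{n=1}^\infty\ell_\infty^n\right)_{\ell_2}$. Then every finite subset $F$ of $T^\omega_\omega$ satisfies $c_Y(F)=1$ (in particular $T^\omega_\omega$ is crudely finitely representable in $Y$), but $T^\omega_\omega$ admits no bi-Lipschitz embedding into $Y$.
   Context: $\left(\sum_{n=1}^\infty\ell_\infty^n\right)_{\ell_2}$ is the Banach space of sequences $(x_n)_{n\ge1}$ with $x_n\in\ell_\infty^n$ (the space $\mathbb R^n$ with the max norm) and $\|(x_n)\|=(\sum_n\|x_n\|_\infty^2)^{1/2}<\infty$. $T^\omega_\omega$ is the rooted tree in which every vertex has countably infinitely many children, with the unweighted shortest-path metric. A metric space $X$ is $\lambda$-finitely representable in $Y$ if $c_Y(F)\le\lambda$ for every finite $F\subset X$, and crudely finitely representable if this holds for some $\lambda\in[1,\infty)$; here $c_Y(M):=\inf\{\mathrm{Lip}(f)\mathrm{Lip}(f^{-1}): f\colon M\to Y\text{ injective}\}$. *)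

theory Defs
  imports "HOL-Analysis.Analysis"
begin

text \<open>An element of Y is represented by x :: nat => nat => real, where x n is the
  n-th block (a vector in R^n, coordinates 0..<n); coordinates outside the block
  (and the whole block 0) are required to vanish.\<close>

definition block_norm :: "(nat \<Rightarrow> nat \<Rightarrow> real) \<Rightarrow> nat \<Rightarrow> real" where
  "block_norm x n = Max (insert 0 ((\<lambda>i. \<bar>x n i\<bar>) ` {..<n}))"

definition Yspace :: "(nat \<Rightarrow> nat \<Rightarrow> real) set" where
  "Yspace = {x. (\<forall>n i. n \<le> i \<longrightarrow> x n i = 0) \<and>
                 summable (\<lambda>n. (block_norm x n)\<^sup>2)}"

definition Ynorm :: "(nat \<Rightarrow> nat \<Rightarrow> real) \<Rightarrow> real" where
  "Ynorm x = sqrt (\<Sum>n. (block_norm x n)\<^sup>2)"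

definition Ydist :: "(nat \<Rightarrow> nat \<Rightarrow> real) \<Rightarrow> (nat \<Rightarrow> nat \<Rightarrow> real) \<Rightarrow> real" where
  "Ydist x y = Ynorm (\<lambda>n i. x n i - y n i)"

text \<open>Vertices are finite sequences of naturals (root = []); the children of xs are
  xs @ [k]. The shortest-path metric is |xs| + |ys| - 2 |common prefix|.\<close>

fun lcp_len :: "nat list \<Rightarrow> nat list \<Rightarrow> nat" where
  "lcp_len (x # xs) (y # ys) = (if x = y then Suc (lcp_len xs ys) else 0)"
| "lcp_len _ _ = 0"

definition tree_dist :: "nat list \<Rightarrow> nat list \<Rightarrow> real" where
  "tree_dist xs ys = real (length xs + length ys - 2 * lcp_len xs ys)"

text \<open>f : M -> Y is an injective map with Lip(f) Lip(f^-1) <= D, expressed by scaling: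
  s d(x,y) <= rho(f x, f y) <= s D d(x,y).\<close>

definition embeds_with_distortion ::
  "('a \<Rightarrow> 'a \<Rightarrow> real) \<Rightarrow> 'a set \<Rightarrow> ('b \<Rightarrow> 'b \<Rightarrow> real) \<Rightarrow> 'b set \<Rightarrow> real \<Rightarrow> bool" where
  "embeds_with_distortion dX M dY Y D \<longleftrightarrow>
     (\<exists>f. inj_on f M \<and> f ` M \<subseteq> Y \<and>
        (\<exists>s>0. \<forall>x\<in>M. \<forall>y\<in>M. s * dX x y \<le> dY (f x) (f y) \<and> dY (f x) (f y) \<le> s * D * dX x y))"

definition distortion ::
  "('a \<Rightarrow> 'a \<Rightarrow> real) \<Rightarrow> 'a set \<Rightarrow> ('b \<Rightarrow> 'b \<Rightarrow> real) \<Rightarrow> 'b set \<Rightarrow> real" where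
  "distortion dX M dY Y = Inf {D. D \<ge> 1 \<and> embeds_with_distortion dX M dY Y D}"

end

theory Submission
  imports Defs
begin

(* Finite subsets of the tree embed isometrically into a single block l_inf^n of Y by the
   Frechet embedding x |-> (d(x,p))_{p in F}.

   Now let s d(x,y) <= |f x - f y| <= L d(x,y). The l_2-sum structure of Y yields a fork
   estimate: if infinitely many w_k are pairwise B apart and within A of v, and u is within A
   of v, then |u - w_k|^2 <= 4A^2 - B^2/4 + eps for some k. Beyond some block N the vector
   u - v is negligible, while by compactness of the first N blocks two of the w_k are close
   there; being B apart, they force some v - w_k to have tail at least about B/2, hence a short
   head, and u reaches that w_k more cheaply than through the triangle inequality.
   Say close_descendants f T lam if from every vertex x infinitely many branches contain a
   vertex at depth T below x whose image is within lam T of f x. Applying the fork estimate to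
   x, such a vertex m, and depth-T descendants of infinitely many children of m (pairwise 2T
   apart) turns the ratio lam at depth T into sqrt(lam^2 - s^2/8) at depth 2T. Starting from
   lam = L at depth 1 and iterating, lam^2 eventually becomes negative, whereas lam >= s. *)

lemma abs_le_block_norm: "i < n \<Longrightarrow> \<bar>x n i\<bar> \<le> block_norm x n"
  unfolding block_norm_def by (rule Max_ge) auto

lemma block_norm_nonneg: "0 \<le> block_norm x n"
  unfolding block_norm_def by (rule Max_ge) auto

lemma block_norm_le: "0 \<le> c \<Longrightarrow> (\<And>i. i < n \<Longrightarrow> \<bar>x n i\<bar> \<le> c) \<Longrightarrow> block_norm x n \<le> c"
  unfolding block_norm_def by (rule Max.boundedI) auto

lemma block_norm_diff_triangle: "block_norm (a - c) n \<le> block_norm (a - b) n + block_norm (b - c) n"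
proof (rule block_norm_le)
  show "0 \<le> block_norm (a - b) n + block_norm (b - c) n"
    by (simp add: block_norm_nonneg)
  fix i assume "i < n"
  then have "\<bar>a n i - b n i\<bar> \<le> block_norm (a - b) n" "\<bar>b n i - c n i\<bar> \<le> block_norm (b - c) n"
    using abs_le_block_norm[of i n "a - b"] abs_le_block_norm[of i n "b - c"] by auto
  then show "\<bar>(a - c) n i\<bar> \<le> block_norm (a - b) n + block_norm (b - c) n"
    by simp
qed

lemma block_norm_diff_commute: "block_norm (a - b) n = block_norm (b - a) n"
  unfolding block_norm_def by (simp add: abs_minus_commute)

lemma summable_square_le_add:
  fixes p q r :: "nat \<Rightarrow> real"
  assumes "\<And>n. 0 \<le> r n" "\<And>n. r n \<le> p n + q n"
    and "summable (\<lambda>n. (p n)\<^sup>2)" "summable (\<lambda>n. (q n)\<^sup>2)"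
  shows "summable (\<lambda>n. (r n)\<^sup>2)"
proof (rule summable_comparison_test)
  have "(r n)\<^sup>2 \<le> (p n + q n)\<^sup>2" for n
    using assms(1,2) by (intro power_mono) auto
  also have "(p n + q n)\<^sup>2 \<le> 2 * (p n)\<^sup>2 + 2 * (q n)\<^sup>2" for n
    using zero_le_power2[of "p n - q n"] by (simp add: power2_eq_square algebra_simps)
  finally show "\<exists>N. \<forall>n\<ge>N. norm ((r n)\<^sup>2) \<le> 2 * (p n)\<^sup>2 + 2 * (q n)\<^sup>2"
    by auto
  show "summable (\<lambda>n. 2 * (p n)\<^sup>2 + 2 * (q n)\<^sup>2)"
    using assms(3,4) by (intro summable_add summable_mult)
qed

lemma sqrt_suminf_square_triangle:
  fixes p q r :: "nat \<Rightarrow> real"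
  assumes r: "\<And>n. 0 \<le> r n" "\<And>n. r n \<le> p n + q n"
    and p: "summable (\<lambda>n. (p n)\<^sup>2)" and q: "summable (\<lambda>n. (q n)\<^sup>2)"
  shows "sqrt (\<Sum>n. (r n)\<^sup>2) \<le> sqrt (\<Sum>n. (p n)\<^sup>2) + sqrt (\<Sum>n. (q n)\<^sup>2)"
proof -
  define C where "C = sqrt (\<Sum>n. (p n)\<^sup>2) + sqrt (\<Sum>n. (q n)\<^sup>2)"
  have "L2_set r {..<M} \<le> C" for M
  proof -
    have "L2_set r {..<M} \<le> L2_set (\<lambda>n. p n + q n) {..<M}"
      using r by (intro L2_set_mono) auto
    also have "\<dots> \<le> L2_set p {..<M} + L2_set q {..<M}"
      by (rule L2_set_triangle_ineq)
    also have "\<dots> \<le> C"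
      unfolding C_def L2_set_def by (intro add_mono real_sqrt_le_mono sum_le_suminf p q) auto
    finally show ?thesis .
  qed
  moreover from this[of 0] have C: "0 \<le> C"
    by simp
  ultimately have "(\<Sum>n<M. (r n)\<^sup>2) \<le> C\<^sup>2" for M
    unfolding L2_set_def by (simp add: sqrt_le_D)
  then have "(\<Sum>n. (r n)\<^sup>2) \<le> C\<^sup>2"
    by (intro suminf_le_const summable_square_le_add[OF r p q])
  then show ?thesis
    unfolding C_def[symmetric] using C real_le_lsqrt by blast
qed

lemma Ydist_eq: "Ydist a b = sqrt (\<Sum>n. (block_norm (a - b) n)\<^sup>2)"
  unfolding Ydist_def Ynorm_def fun_diff_def by simp

lemma summable_block_norm_diff:
  assumes "a \<in> Yspace" "b \<in> Yspace"
  shows "summable (\<lambda>n. (block_norm (a - b) n)\<^sup>2)"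
proof (rule summable_square_le_add)
  let ?z = "\<lambda>n i. 0 :: real"
  show "block_norm (a - b) n \<le> block_norm (a - ?z) n + block_norm (?z - b) n" for n
    by (rule block_norm_diff_triangle)
  have "a - ?z = a" "b - ?z = b"
    by (simp_all add: fun_eq_iff)
  then show "summable (\<lambda>n. (block_norm (a - ?z) n)\<^sup>2)" "summable (\<lambda>n. (block_norm (?z - b) n)\<^sup>2)"
    using assms by (simp_all add: Yspace_def block_norm_diff_commute[of ?z b])
qed (rule block_norm_nonneg)

definition head_norm :: "nat \<Rightarrow> (nat \<Rightarrow> nat \<Rightarrow> real) \<Rightarrow> real" where
  "head_norm N z = L2_set (block_norm z) {..<N}"

definition tail_norm :: "nat \<Rightarrow> (nat \<Rightarrow> nat \<Rightarrow> real) \<Rightarrow> real" where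
  "tail_norm N z = sqrt (\<Sum>n. (block_norm z (n + N))\<^sup>2)"

lemma head_norm_nonneg: "0 \<le> head_norm N z"
  unfolding head_norm_def by simp

lemma Ydist_square_split:
  assumes "a \<in> Yspace" "b \<in> Yspace"
  shows "(Ydist a b)\<^sup>2 = (head_norm N (a - b))\<^sup>2 + (tail_norm N (a - b))\<^sup>2"
proof -
  let ?f = "\<lambda>n. (block_norm (a - b) n)\<^sup>2"
  have f: "summable ?f"
    using assms by (rule summable_block_norm_diff)
  have "0 \<le> (\<Sum>n. ?f (n + N))" "0 \<le> suminf ?f"
    using f by (auto intro!: suminf_nonneg summable_ignore_initial_segment)
  then show ?thesis
    unfolding Ydist_eq head_norm_def tail_norm_def L2_set_def
    using suminf_split_initial_segment[OF f, of N] by (simp add: sum_nonneg)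
qed

lemma tail_norm_nonneg:
  assumes "a \<in> Yspace" "b \<in> Yspace"
  shows "0 \<le> tail_norm N (a - b)"
  using summable_block_norm_diff[OF assms] unfolding tail_norm_def
  by (auto intro!: suminf_nonneg summable_ignore_initial_segment)

lemma Ydist_nonneg:
  assumes "a \<in> Yspace" "b \<in> Yspace"
  shows "0 \<le> Ydist a b"
  using summable_block_norm_diff[OF assms] unfolding Ydist_eq
  by (auto intro!: suminf_nonneg)

lemma head_norm_le_Ydist:
  assumes "a \<in> Yspace" "b \<in> Yspace"
  shows "head_norm N (a - b) \<le> Ydist a b"
proof (rule power2_le_imp_le)
  show "(head_norm N (a - b))\<^sup>2 \<le> (Ydist a b)\<^sup>2"
    using Ydist_square_split[OF assms, of N] by simp
qed (rule Ydist_nonneg[OF assms])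

lemma block_norm_le_Ydist:
  assumes "a \<in> Yspace" "b \<in> Yspace"
  shows "block_norm (a - b) n \<le> Ydist a b"
proof -
  have "block_norm (a - b) n \<le> head_norm (Suc n) (a - b)"
    unfolding head_norm_def by (rule member_le_L2_set) auto
  also have "\<dots> \<le> Ydist a b"
    using assms by (rule head_norm_le_Ydist)
  finally show ?thesis .
qed

lemma head_norm_diff_triangle: "head_norm N (a - c) \<le> head_norm N (a - b) + head_norm N (b - c)"
proof -
  have "head_norm N (a - c) \<le> L2_set (\<lambda>n. block_norm (a - b) n + block_norm (b - c) n) {..<N}"
    unfolding head_norm_def
    by (intro L2_set_mono block_norm_diff_triangle block_norm_nonneg)
  also have "\<dots> \<le> head_norm N (a - b) + head_norm N (b - c)"
    unfolding head_norm_def by (rule L2_set_triangle_ineq)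
  finally show ?thesis .
qed

lemma tail_norm_diff_triangle:
  assumes "a \<in> Yspace" "b \<in> Yspace" "c \<in> Yspace"
  shows "tail_norm N (a - c) \<le> tail_norm N (a - b) + tail_norm N (b - c)"
  unfolding tail_norm_def
  by (intro sqrt_suminf_square_triangle block_norm_nonneg block_norm_diff_triangle
      summable_block_norm_diff[THEN summable_ignore_initial_segment] assms)

lemma tail_norm_diff_commute: "tail_norm N (a - b) = tail_norm N (b - a)"
  unfolding tail_norm_def by (simp add: block_norm_diff_commute)

lemma tail_norm_eventually_le:
  assumes "a \<in> Yspace" "b \<in> Yspace" "0 < \<delta>"
  shows "\<exists>N. tail_norm N (a - b) \<le> \<delta>"
proof -
  obtain N where "\<bar>\<Sum>n. (block_norm (a - b) (n + N))\<^sup>2\<bar> < \<delta>\<^sup>2"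
    using suminf_exist_split[OF _ summable_block_norm_diff[OF assms(1,2)], of "\<delta>\<^sup>2"] assms(3)
    by fastforce
  then have "tail_norm N (a - b) \<le> sqrt (\<delta>\<^sup>2)"
    unfolding tail_norm_def by (intro real_sqrt_le_mono) simp
  then show ?thesis
    using assms(3) by auto
qed

section \<open>The fork estimate\<close>

lemma abs_diff_le_if_floor_divide_eq:
  fixes a b e :: real
  assumes e: "0 < e" and floor: "\<lfloor>a / e\<rfloor> = \<lfloor>b / e\<rfloor>"
  shows "\<bar>a - b\<bar> \<le> e"
proof -
  have "\<bar>a / e - b / e\<bar> \<le> 1"
    using floor by linarith
  moreover have "\<bar>a - b\<bar> = e * \<bar>a / e - b / e\<bar>"
    using e by (simp add: abs_mult_pos' algebra_simps)
  ultimately show ?thesis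
    using e by (simp add: mult_le_cancel_left1)
qed

lemma infinite_bounded_family_close_pair:
  fixes g :: "'k \<Rightarrow> 'c \<Rightarrow> real"
  assumes K: "infinite K" and S: "finite S" and e: "0 < e"
    and bound: "\<And>k c. k \<in> K \<Longrightarrow> c \<in> S \<Longrightarrow> \<bar>g k c\<bar> \<le> A"
  shows "\<exists>k\<in>K. \<exists>j\<in>K. k \<noteq> j \<and> (\<forall>c\<in>S. \<bar>g k c - g j c\<bar> \<le> e)"
proof -
  define cell where "cell k = (\<lambda>c\<in>S. \<lfloor>g k c / e\<rfloor>)" for k
  have "cell ` K \<subseteq> (\<Pi>\<^sub>E c\<in>S. {\<lfloor>- A / e\<rfloor>..\<lfloor>A / e\<rfloor>})"
  proof (rule image_subsetI)
    fix k assume "k \<in> K"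
    have "\<lfloor>g k c / e\<rfloor> \<in> {\<lfloor>- A / e\<rfloor>..\<lfloor>A / e\<rfloor>}" if "c \<in> S" for c
    proof -
      have "- A / e \<le> g k c / e" "g k c / e \<le> A / e"
        using bound[OF \<open>k \<in> K\<close> that] e divide_right_mono[of "- A" "g k c" e]
          divide_right_mono[of "g k c" A e]
        by (auto simp: abs_le_iff)
      then show ?thesis
        by (simp add: floor_mono)
    qed
    then show "cell k \<in> (\<Pi>\<^sub>E c\<in>S. {\<lfloor>- A / e\<rfloor>..\<lfloor>A / e\<rfloor>})"
      by (simp add: cell_def restrict_PiE_iff)
  qed
  then have "finite (cell ` K)"
    by (rule finite_subset) (simp add: S finite_PiE)
  then obtain k where k: "k \<in> K" and "infinite {j\<in>K. cell j = cell k}"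
    using pigeonhole_infinite[OF K] by blast
  from this(2) have "infinite ({j\<in>K. cell j = cell k} - {k})"
    by (rule infinite_remove)
  then obtain j where j: "j \<in> K" "j \<noteq> k" "cell j = cell k"
    using infinite_imp_nonempty by blast
  have "\<bar>g k c - g j c\<bar> \<le> e" if "c \<in> S" for c
    using j(3) that e abs_diff_le_if_floor_divide_eq unfolding cell_def by (metis restrict_apply')
  then show ?thesis
    using k j(1,2) by (intro bexI[of _ k] bexI[of _ j]) auto
qed

lemma Yspace_head_close_pair:
  assumes v: "v \<in> Yspace" and w: "w ` K \<subseteq> Yspace" and K: "infinite K"
    and near: "\<And>k. k \<in> K \<Longrightarrow> Ydist v (w k) \<le> A" and \<delta>: "0 < \<delta>"
  shows "\<exists>k\<in>K. \<exists>j\<in>K. k \<noteq> j \<and> head_norm N (w k - w j) \<le> \<delta>"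
proof -
  define e where "e = \<delta> / (real N + 1)"
  have e: "0 < e"
    using \<delta> by (simp add: e_def)
  have "\<bar>(v - w k) n i\<bar> \<le> A" if "k \<in> K" "(n, i) \<in> Sigma {..<N} lessThan" for k n i
    using that abs_le_block_norm[of i n "v - w k"] block_norm_le_Ydist[OF v, of "w k" n] w near[of k]
    by auto
  then obtain k j where kj: "k \<in> K" "j \<in> K" "k \<noteq> j"
    and close: "\<And>n i. n < N \<Longrightarrow> i < n \<Longrightarrow> \<bar>(v - w k) n i - (v - w j) n i\<bar> \<le> e"
    using infinite_bounded_family_close_pair[OF K _ e, of "Sigma {..<N} lessThan"
        "\<lambda>k (n, i). (v - w k) n i" A]
    by auto
  have "head_norm N (w k - w j) \<le> (\<Sum>n<N. block_norm (w k - w j) n)"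
    unfolding head_norm_def by (rule L2_set_le_sum) (rule block_norm_nonneg)
  also have "\<dots> \<le> (\<Sum>n<N. e)"
    using close e by (intro sum_mono block_norm_le) (auto simp: abs_minus_commute)
  also have "\<dots> \<le> \<delta>"
    using \<delta> by (simp add: e_def field_simps)
  finally show ?thesis
    using kj by blast
qed

lemma Yspace_fork_far_tail:
  assumes v: "v \<in> Yspace" and w: "w ` K \<subseteq> Yspace" and K: "infinite K"
    and near: "\<And>k. k \<in> K \<Longrightarrow> Ydist v (w k) \<le> A"
    and apart: "\<And>k j. k \<in> K \<Longrightarrow> j \<in> K \<Longrightarrow> k \<noteq> j \<Longrightarrow> B \<le> Ydist (w k) (w j)"
    and B: "0 \<le> B" and \<delta>: "0 < \<delta>"
  shows "\<exists>k\<in>K. B\<^sup>2 - \<delta>\<^sup>2 \<le> 4 * (tail_norm N (v - w k))\<^sup>2"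
proof -
  define \<rho> where "\<rho> k = tail_norm N (v - w k)" for k
  obtain k j where kj: "k \<in> K" "j \<in> K" "k \<noteq> j" and head: "head_norm N (w k - w j) \<le> \<delta>"
    using Yspace_head_close_pair[OF v w K near \<delta>] by blast
  define i where "i = (if \<rho> j \<le> \<rho> k then k else j)"
  have i: "i \<in> K" "max (\<rho> k) (\<rho> j) = \<rho> i"
    using kj by (auto simp: i_def max_def)
  have wk: "w k \<in> Yspace" and wj: "w j \<in> Yspace"
    using w kj by auto
  have \<rho>: "0 \<le> \<rho> k" "0 \<le> \<rho> j"
    unfolding \<rho>_def using v wk wj by (auto intro: tail_norm_nonneg)
  have tail: "tail_norm N (w k - w j) \<le> \<rho> k + \<rho> j"
    using tail_norm_diff_triangle[OF wk v wj, of N] by (simp add: \<rho>_def tail_norm_diff_commute)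
  have "B\<^sup>2 \<le> (Ydist (w k) (w j))\<^sup>2"
    using apart[OF kj] B by (intro power_mono) auto
  also have "\<dots> = (head_norm N (w k - w j))\<^sup>2 + (tail_norm N (w k - w j))\<^sup>2"
    by (rule Ydist_square_split[OF wk wj])
  also have "\<dots> \<le> \<delta>\<^sup>2 + (\<rho> k + \<rho> j)\<^sup>2"
    using head tail head_norm_nonneg tail_norm_nonneg[OF wk wj] by (intro add_mono power_mono) auto
  also have "\<dots> \<le> \<delta>\<^sup>2 + 4 * (max (\<rho> k) (\<rho> j))\<^sup>2"
    using \<rho> power_mono[of "\<rho> k + \<rho> j" "2 * max (\<rho> k) (\<rho> j)" 2] by (simp add: power_mult_distrib)
  also have "\<dots> = \<delta>\<^sup>2 + 4 * (\<rho> i)\<^sup>2"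
    using i(2) by simp
  finally show ?thesis
    using i(1) unfolding \<rho>_def by (intro bexI[of _ i]) auto
qed

lemma fork_square_bound:
  fixes A B h \<rho> \<delta> :: real
  assumes h\<rho>: "h\<^sup>2 + \<rho>\<^sup>2 \<le> A\<^sup>2" and A: "0 \<le> A" and \<rho>: "0 \<le> \<rho>"
    and far: "B\<^sup>2 - \<delta>\<^sup>2 \<le> 4 * \<rho>\<^sup>2" and \<delta>: "0 < \<delta>" "\<delta> \<le> 1"
  shows "(A + h)\<^sup>2 + (\<delta> + \<rho>)\<^sup>2 \<le> 4 * A\<^sup>2 - B\<^sup>2 / 4 + \<delta> * (2 + 2 * A)"
proof -
  have "\<rho> \<le> A"
    using h\<rho> zero_le_power2[of h] by (intro power2_le_imp_le[OF _ A]) linarith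
  then have "\<delta> * \<rho> \<le> \<delta> * A"
    using \<delta> by (simp add: mult_left_mono)
  moreover have "(A + h)\<^sup>2 \<le> 2 * A\<^sup>2 + 2 * h\<^sup>2"
    using zero_le_power2[of "A - h"] by (simp add: power2_eq_square algebra_simps)
  moreover have "(\<delta> + \<rho>)\<^sup>2 = \<delta>\<^sup>2 + 2 * (\<delta> * \<rho>) + \<rho>\<^sup>2"
    by (simp add: power2_eq_square algebra_simps)
  moreover have "\<delta>\<^sup>2 \<le> \<delta>"
    using \<delta> mult_left_mono[of \<delta> 1 \<delta>] by (simp add: power2_eq_square)
  moreover have "\<delta> * (2 + 2 * A) = 2 * \<delta> + 2 * (\<delta> * A)"
    by (simp add: algebra_simps)
  ultimately show ?thesis
    using h\<rho> far \<delta>(1) by linarith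
qed

lemma Yspace_fork_shortcut:
  assumes u: "u \<in> Yspace" and v: "v \<in> Yspace" and w: "w ` K \<subseteq> Yspace" and K: "infinite K"
    and uv: "Ydist u v \<le> A" and near: "\<And>k. k \<in> K \<Longrightarrow> Ydist v (w k) \<le> A"
    and apart: "\<And>k j. k \<in> K \<Longrightarrow> j \<in> K \<Longrightarrow> k \<noteq> j \<Longrightarrow> B \<le> Ydist (w k) (w j)"
    and B: "0 \<le> B" and \<epsilon>: "0 < \<epsilon>"
  shows "\<exists>k\<in>K. (Ydist u (w k))\<^sup>2 \<le> 4 * A\<^sup>2 - B\<^sup>2 / 4 + \<epsilon>"
proof -
  have A: "0 \<le> A"
    using uv Ydist_nonneg[OF u v] by linarith
  define \<delta> where "\<delta> = min 1 (\<epsilon> / (2 + 2 * A))"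
  have \<delta>: "0 < \<delta>" "\<delta> \<le> 1" "\<delta> * (2 + 2 * A) \<le> \<epsilon>"
    using \<epsilon> A pos_le_divide_eq[of "2 + 2 * A" \<delta> \<epsilon>] by (auto simp: \<delta>_def)
  obtain N where tail_uv: "tail_norm N (u - v) \<le> \<delta>"
    using tail_norm_eventually_le[OF u v \<delta>(1)] by blast
  obtain k where k: "k \<in> K" and far: "B\<^sup>2 - \<delta>\<^sup>2 \<le> 4 * (tail_norm N (v - w k))\<^sup>2"
    using Yspace_fork_far_tail[OF v w K near apart B \<delta>(1)] by blast
  define h where "h = head_norm N (v - w k)"
  define \<rho> where "\<rho> = tail_norm N (v - w k)"
  have wk: "w k \<in> Yspace"
    using w k by auto
  have "(Ydist v (w k))\<^sup>2 \<le> A\<^sup>2"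
    using near[OF k] Ydist_nonneg[OF v wk] by (intro power_mono)
  then have h\<rho>: "h\<^sup>2 + \<rho>\<^sup>2 \<le> A\<^sup>2"
    using Ydist_square_split[OF v wk, of N] by (simp add: h_def \<rho>_def)
  have "(Ydist u (w k))\<^sup>2 = (head_norm N (u - w k))\<^sup>2 + (tail_norm N (u - w k))\<^sup>2"
    by (rule Ydist_square_split[OF u wk])
  also have "\<dots> \<le> (A + h)\<^sup>2 + (\<delta> + \<rho>)\<^sup>2"
  proof (intro add_mono power_mono)
    show "head_norm N (u - w k) \<le> A + h"
      using head_norm_diff_triangle[of N u "w k" v] head_norm_le_Ydist[OF u v, of N] uv
      by (simp add: h_def)
    show "tail_norm N (u - w k) \<le> \<delta> + \<rho>"
      using tail_norm_diff_triangle[OF u v wk, of N] tail_uv by (simp add: \<rho>_def)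
  qed (simp_all add: head_norm_nonneg tail_norm_nonneg u wk)
  also have "\<dots> \<le> 4 * A\<^sup>2 - B\<^sup>2 / 4 + \<delta> * (2 + 2 * A)"
    using h\<rho> A tail_norm_nonneg[OF v wk] far \<delta>(1,2)
    unfolding \<rho>_def by (rule fork_square_bound)
  finally show ?thesis
    using k \<delta>(3) by force
qed

lemma lcp_len_append_same: "lcp_len (x @ a) (x @ b) = length x + lcp_len a b"
  by (induction x) auto

lemma lcp_len_self: "lcp_len x x = length x"
  by (induction x) auto

lemma lcp_len_le_length: "lcp_len a b \<le> length a" "lcp_len a b \<le> length b"
  by (induction a b rule: lcp_len.induct) auto

lemma lcp_len_commute: "lcp_len a b = lcp_len b a"
  by (induction a b rule: lcp_len.induct) auto

lemma lcp_len_min_le: "min (lcp_len x y) (lcp_len y z) \<le> lcp_len x z"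
proof (induction x y arbitrary: z rule: lcp_len.induct)
  case (1 x xs y ys)
  then show ?case
    by (cases z) auto
qed auto

lemma lcp_len_eq_length_imp_eq: "lcp_len x y = length x \<Longrightarrow> length x = length y \<Longrightarrow> x = y"
  by (induction x y rule: lcp_len.induct) (auto split: if_splits)

lemma tree_dist_eq: "tree_dist x y = real (length x) + real (length y) - 2 * real (lcp_len x y)"
  using lcp_len_le_length[of x y] unfolding tree_dist_def by simp

lemma tree_dist_commute: "tree_dist x y = tree_dist y x"
  unfolding tree_dist_eq by (simp add: lcp_len_commute)

lemma tree_dist_triangle: "tree_dist x z \<le> tree_dist x y + tree_dist y z"
  using lcp_len_min_le[of x y z] lcp_len_le_length[of x y] lcp_len_le_length[of y z]
  unfolding tree_dist_eq by linarith

lemma tree_dist_eq_0_iff: "tree_dist x y = 0 \<longleftrightarrow> x = y"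
proof
  assume "tree_dist x y = 0"
  then have "lcp_len x y = length x" "length x = length y"
    using lcp_len_le_length[of x y] unfolding tree_dist_eq by linarith+
  then show "x = y"
    by (rule lcp_len_eq_length_imp_eq)
qed (simp add: tree_dist_eq lcp_len_self)

lemma tree_dist_append: "tree_dist x (x @ zs) = real (length zs)"
  using lcp_len_append_same[of x "[]" zs] unfolding tree_dist_eq by simp

lemma tree_dist_fork:
  "k \<noteq> k' \<Longrightarrow> tree_dist (x @ k # a) (x @ k' # b) = real (length a + length b + 2)"
  using lcp_len_append_same[of x "k # a" "k' # b"] unfolding tree_dist_eq by simp

section \<open>Isometric embedding of finite metric spaces\<close>

lemma single_block_in_Yspace:
  assumes "\<And>m i. m \<noteq> n \<Longrightarrow> a m i = 0" "\<And>i. n \<le> i \<Longrightarrow> a n i = 0"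
  shows "a \<in> Yspace"
proof -
  have "block_norm a m = 0" if "m \<noteq> n" for m
    using assms(1)[OF that] by (intro antisym block_norm_le block_norm_nonneg) auto
  then have "summable (\<lambda>m. (block_norm a m)\<^sup>2)"
    by (intro summable_finite[of "{n}"]) auto
  moreover have "a m i = 0" if "m \<le> i" for m i
    using assms that by (cases "m = n") auto
  ultimately show ?thesis
    unfolding Yspace_def by blast
qed

lemma Ydist_single_block:
  assumes "\<And>m i. m \<noteq> n \<Longrightarrow> a m i = 0" "\<And>m i. m \<noteq> n \<Longrightarrow> b m i = 0"
  shows "Ydist a b = block_norm (a - b) n"
proof -
  have "block_norm (a - b) m = 0" if "m \<noteq> n" for m
    using assms that by (intro antisym block_norm_le block_norm_nonneg) auto
  then have "(\<Sum>m. (block_norm (a - b) m)\<^sup>2) = (block_norm (a - b) n)\<^sup>2"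
    by (subst suminf_finite[of "{n}"]) auto
  then show ?thesis
    unfolding Ydist_eq by (simp add: block_norm_nonneg)
qed

definition frechet_block :: "('a \<Rightarrow> 'a \<Rightarrow> real) \<Rightarrow> 'a list \<Rightarrow> 'a \<Rightarrow> nat \<Rightarrow> nat \<Rightarrow> real" where
  "frechet_block d ps x = (\<lambda>m i. if m = length ps \<and> i < length ps then d x (ps ! i) else 0)"

lemma frechet_block_in_Yspace: "frechet_block d ps x \<in> Yspace"
  by (rule single_block_in_Yspace[of "length ps"]) (auto simp: frechet_block_def)

lemma Ydist_frechet_block:
  fixes d :: "'a \<Rightarrow> 'a \<Rightarrow> real"
  assumes triangle: "\<And>x y z. d x z \<le> d x y + d y z" and commute: "\<And>x y. d x y = d y x"
    and self: "\<And>x. d x x = 0" and y: "y \<in> set ps"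
  shows "Ydist (frechet_block d ps x) (frechet_block d ps y) = d x y"
proof -
  let ?g = "frechet_block d ps" and ?M = "length ps"
  have "Ydist (?g x) (?g y) = block_norm (?g x - ?g y) ?M"
    by (rule Ydist_single_block) (auto simp: frechet_block_def)
  also have "\<dots> = d x y"
  proof (rule antisym)
    have nonneg: "0 \<le> d x y"
      using triangle[of x x y] commute[of x y] self[of x] by linarith
    show "block_norm (?g x - ?g y) ?M \<le> d x y"
    proof (rule block_norm_le[OF nonneg])
      fix i assume "i < ?M"
      have "\<bar>d x (ps ! i) - d y (ps ! i)\<bar> \<le> d x y"
        using triangle[of x "ps ! i" y] triangle[of y "ps ! i" x] commute[of x y] by linarith
      then show "\<bar>(?g x - ?g y) ?M i\<bar> \<le> d x y"
        using \<open>i < ?M\<close> by (simp add: frechet_block_def)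
    qed
    obtain i where i: "i < ?M" "ps ! i = y"
      using y unfolding in_set_conv_nth by blast
    then have "\<bar>(?g x - ?g y) ?M i\<bar> = d x y"
      using nonneg self[of y] by (simp add: frechet_block_def)
    then show "d x y \<le> block_norm (?g x - ?g y) ?M"
      using abs_le_block_norm[OF i(1), of "?g x - ?g y"] by linarith
  qed
  finally show ?thesis .
qed

lemma finite_metric_embeds_isometrically:
  fixes d :: "'a \<Rightarrow> 'a \<Rightarrow> real"
  assumes F: "finite F"
    and triangle: "\<And>x y z. d x z \<le> d x y + d y z" and commute: "\<And>x y. d x y = d y x"
    and eq_0_iff: "\<And>x y. d x y = 0 \<longleftrightarrow> x = y"
  shows "embeds_with_distortion d F Ydist Yspace 1"
proof -
  obtain ps where ps: "set ps = F"
    using finite_list[OF F] by blast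
  let ?g = "frechet_block d ps"
  have self: "d x x = 0" for x
    using eq_0_iff by simp
  have isometric: "Ydist (?g x) (?g y) = d x y" if "y \<in> F" for x y
    using that ps by (intro Ydist_frechet_block[OF triangle commute self]) auto
  have "inj_on ?g F"
  proof (rule inj_onI)
    fix x y assume "x \<in> F" "y \<in> F" "?g x = ?g y"
    then have "d x y = d y y"
      using isometric by metis
    then show "x = y"
      using eq_0_iff self by metis
  qed
  then show ?thesis
    unfolding embeds_with_distortion_def using frechet_block_in_Yspace isometric
    by (intro exI[of _ ?g] conjI exI[of _ 1]) auto
qed

section \<open>No bi-Lipschitz embedding of the tree\<close>

definition close_descendants :: "(nat list \<Rightarrow> nat \<Rightarrow> nat \<Rightarrow> real) \<Rightarrow> nat \<Rightarrow> real \<Rightarrow> bool" where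
  "close_descendants f T lam \<longleftrightarrow>
     (\<forall>x. infinite {k. \<exists>ys. length ys + 1 = T \<and> Ydist (f x) (f (x @ k # ys)) \<le> lam * real T})"

lemma close_descendants_ge:
  assumes lower: "\<And>x y. s * tree_dist x y \<le> Ydist (f x) (f y)"
    and close: "close_descendants f T lam"
  shows "s \<le> lam"
proof -
  have "{k. \<exists>ys. length ys + 1 = T \<and> Ydist (f []) (f ([] @ k # ys)) \<le> lam * real T} \<noteq> {}"
    using close infinite_imp_nonempty unfolding close_descendants_def by blast
  then obtain k ys where ys: "length ys + 1 = T" "Ydist (f []) (f ([] @ k # ys)) \<le> lam * real T"
    by blast
  moreover have "s * real T \<le> Ydist (f []) (f ([] @ k # ys))"
    using lower[of "[]" "[] @ k # ys"] tree_dist_append[of "[]" "k # ys"] by (simp add: ys(1)[symmetric])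
  ultimately have "s * real T \<le> lam * real T"
    by linarith
  then show ?thesis
    using ys(1) by simp
qed

lemma close_descendants_shortcut:
  assumes f: "range f \<subseteq> Yspace" and s: "0 < s"
    and lower: "\<And>x y. s * tree_dist x y \<le> Ydist (f x) (f y)"
    and close: "close_descendants f T lam" and near: "Ydist (f x) (f m) \<le> lam * real T"
  shows "\<exists>k zs. length zs + 1 = T \<and>
           Ydist (f x) (f (m @ k # zs)) \<le> sqrt (lam\<^sup>2 - s\<^sup>2 / 8) * real (2 * T)"
proof -
  define K where "K = {k. \<exists>zs. length zs + 1 = T \<and> Ydist (f m) (f (m @ k # zs)) \<le> lam * real T}"
  have K: "infinite K"
    using close unfolding close_descendants_def K_def by blast
  have "\<forall>k\<in>K. \<exists>zs. length zs + 1 = T \<and> Ydist (f m) (f (m @ k # zs)) \<le> lam * real T"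
    by (simp add: K_def)
  from bchoice[OF this] obtain zs where zs: "\<And>k. k \<in> K \<Longrightarrow>
      length (zs k) + 1 = T \<and> Ydist (f m) (f (m @ k # zs k)) \<le> lam * real T"
    by blast
  define w where "w k = f (m @ k # zs k)" for k
  have fY: "f y \<in> Yspace" for y
    using f by blast
  have wY: "w ` K \<subseteq> Yspace"
    using fY by (auto simp: w_def)
  have near_w: "Ydist (f m) (w k) \<le> lam * real T" if "k \<in> K" for k
    using zs[OF that] by (simp add: w_def)
  have apart: "2 * s * real T \<le> Ydist (w k) (w j)" if "k \<in> K" "j \<in> K" "k \<noteq> j" for k j
  proof -
    have "real (length (zs k) + length (zs j) + 2) = 2 * real T"
      using zs[OF that(1)] zs[OF that(2)] by simp
    then show ?thesis
      using lower[of "m @ k # zs k" "m @ j # zs j"] tree_dist_fork[OF that(3)] by (simp add: w_def)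
  qed
  have "0 < T"
    using infinite_imp_nonempty[OF K] zs by fastforce
  then have "0 < s\<^sup>2 * (real T)\<^sup>2 / 2"
    using s by simp
  from Yspace_fork_shortcut[OF fY fY wY K near near_w apart _ this] s
  obtain k where k: "k \<in> K"
    and "(Ydist (f x) (w k))\<^sup>2 \<le> 4 * (lam * real T)\<^sup>2 - (2 * s * real T)\<^sup>2 / 4 + s\<^sup>2 * (real T)\<^sup>2 / 2"
    by auto
  then have "(Ydist (f x) (w k))\<^sup>2 \<le> (real (2 * T))\<^sup>2 * (lam\<^sup>2 - s\<^sup>2 / 8)"
    by (simp add: power2_eq_square algebra_simps)
  then have "Ydist (f x) (w k) \<le> sqrt ((real (2 * T))\<^sup>2 * (lam\<^sup>2 - s\<^sup>2 / 8))"
    by (rule real_le_rsqrt)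
  also have "\<dots> = sqrt (lam\<^sup>2 - s\<^sup>2 / 8) * real (2 * T)"
    by (simp add: real_sqrt_mult)
  finally show ?thesis
    using zs[OF k] unfolding w_def by blast
qed

lemma close_descendants_double:
  assumes f: "range f \<subseteq> Yspace" and s: "0 < s"
    and lower: "\<And>x y. s * tree_dist x y \<le> Ydist (f x) (f y)"
    and close: "close_descendants f T lam"
  shows "close_descendants f (2 * T) (sqrt (lam\<^sup>2 - s\<^sup>2 / 8))"
  unfolding close_descendants_def
proof
  fix x
  let ?D = "\<lambda>t c. {k. \<exists>ys. length ys + 1 = t \<and> Ydist (f x) (f (x @ k # ys)) \<le> c * real t}"
  have "?D T lam \<subseteq> ?D (2 * T) (sqrt (lam\<^sup>2 - s\<^sup>2 / 8))"
  proof
    fix k assume "k \<in> ?D T lam"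
    then obtain ys where ys: "length ys + 1 = T" "Ydist (f x) (f (x @ k # ys)) \<le> lam * real T"
      by blast
    obtain k' zs where "length zs + 1 = T"
      and "Ydist (f x) (f ((x @ k # ys) @ k' # zs)) \<le> sqrt (lam\<^sup>2 - s\<^sup>2 / 8) * real (2 * T)"
      using close_descendants_shortcut[OF f s lower close ys(2)] by blast
    with ys(1) show "k \<in> ?D (2 * T) (sqrt (lam\<^sup>2 - s\<^sup>2 / 8))"
      by (intro CollectI exI[of _ "ys @ k' # zs"]) simp
  qed
  then show "infinite (?D (2 * T) (sqrt (lam\<^sup>2 - s\<^sup>2 / 8)))"
    using close infinite_super unfolding close_descendants_def by blast
qed

lemma close_descendants_iterate:
  assumes f: "range f \<subseteq> Yspace" and s: "0 < s"
    and lower: "\<And>x y. s * tree_dist x y \<le> Ydist (f x) (f y)"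
    and close: "close_descendants f 1 L"
  shows "close_descendants f (2 ^ j) (sqrt (L\<^sup>2 - real j * s\<^sup>2 / 8))"
proof (induction j)
  case 0
  have "0 \<le> L"
    using close_descendants_ge[OF lower close] s by linarith
  then show ?case
    using close by simp
next
  case (Suc j)
  have "0 < sqrt (L\<^sup>2 - real j * s\<^sup>2 / 8)"
    using close_descendants_ge[OF lower Suc.IH] s by linarith
  then have "(sqrt (L\<^sup>2 - real j * s\<^sup>2 / 8))\<^sup>2 - s\<^sup>2 / 8 = L\<^sup>2 - real (Suc j) * s\<^sup>2 / 8"
    by (simp add: algebra_simps)
  then show ?case
    using close_descendants_double[OF f s lower Suc.IH] by simp
qed

lemma tree_not_bilipschitz_into_Y:
  "\<not> embeds_with_distortion tree_dist (UNIV :: nat list set) Ydist Yspace D"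
proof
  assume "embeds_with_distortion tree_dist (UNIV :: nat list set) Ydist Yspace D"
  then obtain f s where f: "range f \<subseteq> Yspace" and s: "0 < s"
    and lower: "\<And>x y. s * tree_dist x y \<le> Ydist (f x) (f y)"
    and upper: "\<And>x y. Ydist (f x) (f y) \<le> s * D * tree_dist x y"
    unfolding embeds_with_distortion_def by blast
  have "Ydist (f x) (f (x @ [k])) \<le> s * D" for x k
    using upper[of x "x @ [k]"] tree_dist_append[of x "[k]"] by simp
  then have "close_descendants f 1 (s * D)"
    unfolding close_descendants_def by simp
  note descend = close_descendants_iterate[OF f s lower this]
  obtain j :: nat where "8 * (s * D)\<^sup>2 / s\<^sup>2 < j"
    using reals_Archimedean2 by blast
  then have "sqrt ((s * D)\<^sup>2 - real j * s\<^sup>2 / 8) < 0"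
    using s by (simp add: field_simps)
  then show False
    using close_descendants_ge[OF lower descend[of j]] s by linarith
qed

theorem mainTheorem8:
  shows "(\<forall>F :: nat list set. finite F \<longrightarrow> distortion tree_dist F Ydist Yspace = 1)
       \<and> (\<exists>lam\<ge>1. \<forall>F :: nat list set. finite F \<longrightarrow> distortion tree_dist F Ydist Yspace \<le> lam)
       \<and> \<not> (\<exists>D. embeds_with_distortion tree_dist (UNIV :: nat list set) Ydist Yspace D)"
proof -
  have "distortion tree_dist F Ydist Yspace = 1" if "finite F" for F :: "nat list set"
  proof -
    have "embeds_with_distortion tree_dist F Ydist Yspace 1"
      using that tree_dist_triangle tree_dist_commute tree_dist_eq_0_iff
      by (rule finite_metric_embeds_isometrically)
    then show ?thesis
      unfolding distortion_def by (intro cInf_eq_minimum) auto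
  qed
  then show ?thesis
    using tree_not_bilipschitz_into_Y by auto
qed

end
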